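(* Let $X\subset\mathbb{R}$ be an interval and $(X,T,\mu)$ a probability preserving dynamical system which is exponentially mixing for $BV$ against $L^1$, and suppose the short return time estimate holds: there are $C,s>0$ such that $\mu(A(r,n))\le Cr^s$ for all $r>0$ and $n\ge1$. Let $(r_n)_n$ be a sequence of positive numbers and $h:\mathbb{N}\to(0,\infty)$ a function with $h(n)\to\infty$ such that \[ r_n\le\frac{1}{(n\log n)^{1/s}h(n)}\quad\text{and}\quad \int\mu(B(x,r_n))\,d\mu(x)\le\frac{1}{n^2h(n)} \] for all large $n$. Then $\mu(\liminf_n F_{n,r_n}^T)=0$.
   Context: $(X,T,\mu)$ is exponentially mixing for $BV$ against $L^1$ if there are $C,\theta>0$ such that for all $\psi$ of bounded variation, all $\varphi\in L^1(\mu)$ and all $n\ge0$, $\bigl|\int\psi\cdot\varphi\circ T^n\,d\mu-\int\psi\,d\mu\int\varphi\,d\mu\bigr|\le C\|\psi\|_{BV}\|\varphi\|_{L^1}e^{-\theta n}$. $A(r,n):=\{x\in X: |x-T^nx|<r\}$. For $n\in\mathbb{N}$, $r>0$: $F_{n,r}^T:=\{x\in X: |T^ix-T^jx|<r \text{ for some } 0\le i<j<n\}$; $F_{n,r_n}^T$ is this set with $r=r_n$. $B(x,r)$ is the open ball of radius $r$ about $x$. *)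

theory Defs
  imports "HOL-Probability.Probability"
begin

definition var_sums :: "real set \<Rightarrow> (real \<Rightarrow> real) \<Rightarrow> real set" where
  "var_sums X f = {(\<Sum>i<n. \<bar>f (x (Suc i)) - f (x i)\<bar>) | n x.
      (\<forall>i\<le>n. x i \<in> X) \<and> (\<forall>i<n. x i < x (Suc i))}"

definition bounded_variation :: "real set \<Rightarrow> (real \<Rightarrow> real) \<Rightarrow> bool" where
  "bounded_variation X f \<longleftrightarrow> bdd_above (var_sums X f) \<and> bdd_above ((\<lambda>x. \<bar>f x\<bar>) ` X)"

definition total_variation :: "real set \<Rightarrow> (real \<Rightarrow> real) \<Rightarrow> real" where
  "total_variation X f = Sup (var_sums X f)"

definition bv_norm :: "real set \<Rightarrow> (real \<Rightarrow> real) \<Rightarrow> real" where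
  "bv_norm X f = (SUP x\<in>X. \<bar>f x\<bar>) + total_variation X f"

definition exp_mixing_BV_L1 :: "real measure \<Rightarrow> (real \<Rightarrow> real) \<Rightarrow> bool" where
  "exp_mixing_BV_L1 M T \<longleftrightarrow> (\<exists>C \<theta>. C > 0 \<and> \<theta> > 0 \<and>
     (\<forall>\<psi> \<phi> (n::nat). bounded_variation (space M) \<psi> \<longrightarrow> integrable M \<phi> \<longrightarrow>
        \<bar>(\<integral>x. \<psi> x * \<phi> ((T ^^ n) x) \<partial>M) - (\<integral>x. \<psi> x \<partial>M) * (\<integral>x. \<phi> x \<partial>M)\<bar>
          \<le> C * bv_norm (space M) \<psi> * (\<integral>x. \<bar>\<phi> x\<bar> \<partial>M) * exp (- \<theta> * real n)))"

definition A_set :: "real measure \<Rightarrow> (real \<Rightarrow> real) \<Rightarrow> real \<Rightarrow> nat \<Rightarrow> real set" where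
  "A_set M T r n = {x \<in> space M. \<bar>x - (T ^^ n) x\<bar> < r}"

definition F_set :: "real measure \<Rightarrow> (real \<Rightarrow> real) \<Rightarrow> nat \<Rightarrow> real \<Rightarrow> real set" where
  "F_set M T n r = {x \<in> space M. \<exists>i j. i < j \<and> j < n \<and> \<bar>(T ^^ i) x - (T ^^ j) x\<bar> < r}"

end

theory Submission
  imports Defs
begin

(*
  Every x in F_{n,r} has an r-close return T^j x to T^i x, so F_{n,r} is covered by the
  preimages T^{-i} A(r,k) with 0 <= i < n and 1 <= k < n, and invariance gives
  mu(F_{n,r}) <= n * sum_k mu(A(r,k)).  For k below K ~ 3 log n / theta the short return
  estimate gives mu(A(r,k)) <= C r^s, which by the choice of r_n is at most
  C / (n log n h(n)^s).  For k >= K, cut X into intervals of length r: a close return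
  stays in the same or a neighbouring interval, and exponential mixing applied to
  indicators of intervals (BV norm at most 3) bounds mu(A(r,k)) by
  3 * int mu(B(x,r)) dmu(x) + 9 C_mix exp(-theta k), which is O(1/(n^2 h(n)) + 1/n^3).
  Hence mu(F_{n,r_n}) -> 0, and a liminf of sets whose measures tend to 0 is null.
*)

lemma var_sums_indicator_Ico_le:
  fixes a b t :: real
  assumes "a \<le> b" and "t \<in> var_sums X (indicator {x \<in> X. a \<le> x \<and> x < b})"
  shows "t \<le> 2"
proof -
  let ?p = "indicator {x \<in> X. a \<le> x \<and> x < b} :: real \<Rightarrow> real"
  obtain n x where t: "t = (\<Sum>i<n. \<bar>?p (x (Suc i)) - ?p (x i)\<bar>)"
    and xX: "\<forall>i\<le>n. x i \<in> X" and inc: "\<forall>i<n. x i < x (Suc i)"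
    using assms(2) unfolding var_sums_def by blast
  define u where "u y = (if a \<le> y then 1 else 0::real)" for y
  define v where "v y = (if b \<le> y then 1 else 0::real)" for y
  have p_eq: "?p y = u y - v y" if "y \<in> X" for y
    using that assms(1) by (auto simp: u_def v_def indicator_def)
  \<comment> \<open>both step functions are monotone, so their variations telescope\<close>
  have "t \<le> (\<Sum>i<n. (u (x (Suc i)) - u (x i)) + (v (x (Suc i)) - v (x i)))"
    unfolding t
  proof (rule sum_mono)
    fix i assume "i \<in> {..<n}"
    then have "x i \<in> X" "x (Suc i) \<in> X" "x i < x (Suc i)" using xX inc by auto
    then show "\<bar>?p (x (Suc i)) - ?p (x i)\<bar> \<le> (u (x (Suc i)) - u (x i)) + (v (x (Suc i)) - v (x i))"
      by (auto simp: p_eq u_def v_def)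
  qed
  also have "\<dots> = (u (x n) - u (x 0)) + (v (x n) - v (x 0))"
    by (simp add: sum.distrib sum_lessThan_telescope[of "\<lambda>i. u (x i)"]
        sum_lessThan_telescope[of "\<lambda>i. v (x i)"])
  also have "\<dots> \<le> 2" by (simp add: u_def v_def)
  finally show ?thesis .
qed

lemma
  fixes a b :: real
  assumes "X \<noteq> {}" and "a \<le> b"
  shows bounded_variation_indicator_Ico: "bounded_variation X (indicator {x \<in> X. a \<le> x \<and> x < b})"
    and bv_norm_indicator_Ico_le: "bv_norm X (indicator {x \<in> X. a \<le> x \<and> x < b}) \<le> 3"
proof -
  let ?p = "indicator {x \<in> X. a \<le> x \<and> x < b} :: real \<Rightarrow> real"
  obtain x0 where x0: "x0 \<in> X" using assms(1) by blast
  have "0 \<in> var_sums X ?p"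
    unfolding var_sums_def using x0 by (intro CollectI exI[of _ 0] exI[of _ "\<lambda>_. x0"]) simp
  then have nonempty: "var_sums X ?p \<noteq> {}" by blast
  have var: "bdd_above (var_sums X ?p)" "total_variation X ?p \<le> 2"
    using var_sums_indicator_Ico_le[OF assms(2)] nonempty
    unfolding total_variation_def by (auto intro!: bdd_aboveI cSup_least)
  have sup: "bdd_above ((\<lambda>x. \<bar>?p x\<bar>) ` X)" "(SUP x\<in>X. \<bar>?p x\<bar>) \<le> 1"
    using assms(1) by (auto intro!: bdd_aboveI[of _ 1] cSUP_least simp: indicator_def)
  show "bounded_variation X ?p"
    unfolding bounded_variation_def using var sup by simp
  show "bv_norm X ?p \<le> 3"
    unfolding bv_norm_def using var sup by simp
qed

lemma abs_diff_less_if_floor_divide_eq: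
  fixes x y r :: real
  assumes "r > 0" and "\<lfloor>x / r\<rfloor> = \<lfloor>y / r\<rfloor>"
  shows "\<bar>x - y\<bar> < r"
proof -
  have "\<bar>x / r - y / r\<bar> < 1" using assms(2) by linarith
  then show ?thesis using assms(1) by (simp add: diff_divide_distrib[symmetric] abs_divide)
qed

lemma floor_divide_adjacent_if_abs_diff_less:
  fixes x y r :: real
  assumes "r > 0" and "\<bar>x - y\<bar> < r"
  shows "\<lfloor>y / r\<rfloor> \<in> {\<lfloor>x / r\<rfloor> - 1, \<lfloor>x / r\<rfloor>, \<lfloor>x / r\<rfloor> + 1}"
proof -
  have "\<bar>x / r - y / r\<bar> < 1" using assms
    by (simp add: diff_divide_distrib[symmetric] abs_divide divide_less_eq)
  moreover have "of_int \<lfloor>x / r\<rfloor> \<le> x / r" "x / r < of_int \<lfloor>x / r\<rfloor> + 1"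
    "of_int \<lfloor>y / r\<rfloor> \<le> y / r" "y / r < of_int \<lfloor>y / r\<rfloor> + 1"
    by linarith+
  ultimately have "\<lfloor>y / r\<rfloor> < \<lfloor>x / r\<rfloor> + 2" "\<lfloor>x / r\<rfloor> < \<lfloor>y / r\<rfloor> + 2"
    by linarith+
  then show ?thesis by auto
qed

lemma ln_ge_1_if_ge_3:
  fixes x :: real
  shows "x \<ge> 3 \<Longrightarrow> ln x \<ge> 1"
  using ln3_gt_1 ln_le_cancel_iff[of 3 x] by linarith

lemma
  fixes x \<theta> :: real
  assumes "x \<ge> 3" and "\<theta> > 0"
  shows log_cutoff_le: "real (nat \<lceil>3 * ln x / \<theta>\<rceil>) \<le> (3 / \<theta> + 1) * ln x"
    and exp_log_cutoff_le: "exp (- \<theta> * real (nat \<lceil>3 * ln x / \<theta>\<rceil>)) \<le> 1 / x ^ 3"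
proof -
  let ?K = "nat \<lceil>3 * ln x / \<theta>\<rceil>"
  have "ln x \<ge> 1" using ln_ge_1_if_ge_3[OF assms(1)] .
  then have K_eq: "real ?K = of_int \<lceil>3 * ln x / \<theta>\<rceil>" using assms(2) by simp
  have "real ?K \<le> 3 * ln x / \<theta> + 1"
    unfolding K_eq by (rule of_int_ceiling_le_add_one)
  then show "real ?K \<le> (3 / \<theta> + 1) * ln x"
    using \<open>ln x \<ge> 1\<close> by (simp add: field_simps)
  have "3 * ln x / \<theta> \<le> real ?K"
    unfolding K_eq by (rule le_of_int_ceiling)
  then have "3 * ln x \<le> \<theta> * real ?K"
    using assms(2) by (simp add: field_simps)
  then have "exp (- \<theta> * real ?K) \<le> exp (- ln (x ^ 3))"
    using assms(1) by (simp add: ln_realpow)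
  also have "\<dots> = 1 / x ^ 3"
    using assms(1) by (simp add: exp_minus inverse_eq_divide)
  finally show "exp (- \<theta> * real ?K) \<le> 1 / x ^ 3" .
qed

lemma powr_le_if_le_inverse_root:
  fixes r s P h :: real
  assumes "r > 0" and "s > 0" and "P > 0" and "h > 0" and "r \<le> 1 / (P powr (1 / s) * h)"
  shows "r powr s \<le> 1 / (P * h powr s)"
proof -
  have "r powr s \<le> (1 / (P powr (1 / s) * h)) powr s"
    using assms by (intro powr_mono2) auto
  also have "\<dots> = 1 / (P * h powr s)"
    using assms by (simp add: powr_divide powr_mult powr_powr)
  finally show ?thesis .
qed

lemma (in finite_measure) measure_liminf_eq_0:
  assumes "\<And>n. F n \<in> sets M" and "(\<lambda>n. measure M (F n)) \<longlonglongrightarrow> 0"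
  shows "measure M (\<Union>N. \<Inter>n\<in>{N..}. F n) = 0"
proof -
  have "(\<Inter>n\<in>{N..}. F n) \<in> null_sets M" for N
  proof -
    have sets: "(\<Inter>n\<in>{N..}. F n) \<in> sets M"
      using assms(1) by (intro sets.countable_INT') auto
    have "\<forall>n\<ge>N. measure M (\<Inter>n\<in>{N..}. F n) \<le> measure M (F n)"
      using assms(1) by (auto intro!: finite_measure_mono)
    then have "measure M (\<Inter>n\<in>{N..}. F n) \<le> 0"
      by (intro LIMSEQ_le_const[OF assms(2)]) blast
    then show ?thesis
      using sets by (auto simp: null_sets_def emeasure_eq_measure intro: antisym)
  qed
  then show ?thesis
    by (intro measure_eq_0_null_sets null_sets_UN)
qed

lemma (in finite_measure) measure_le_if_truncations_le:
  fixes f :: "'a \<Rightarrow> real"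
  assumes "A \<in> sets M" and [measurable]: "f \<in> borel_measurable M"
    and "\<And>N::nat. measure M {x \<in> A. \<bar>f x\<bar> \<le> N} \<le> B"
  shows "measure M A \<le> B"
proof -
  let ?A = "\<lambda>N::nat. {x \<in> A. \<bar>f x\<bar> \<le> N}"
  have "incseq ?A"
    by (auto simp: incseq_def intro: order.trans)
  moreover have "range ?A \<subseteq> sets M" using assms(1) by auto
  moreover have "(\<Union>N. ?A N) = A" by (auto intro: real_nat_ceiling_ge)
  ultimately have "(\<lambda>N. measure M (?A N)) \<longlonglongrightarrow> measure M A"
    by (metis finite_Lim_measure_incseq)
  then show ?thesis using assms(3) by (intro LIMSEQ_le_const2) auto
qed

locale real_prob_space = prob_space M for M :: "real measure" +
  assumes sets_eq_restrict_borel: "sets M = sets (restrict_space borel (space M))"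
begin

lemma measurable_real_ident[measurable]: "(\<lambda>x. x) \<in> borel_measurable M"
  using measurable_restrict_space1[OF measurable_id, of borel "space M"]
  by (subst measurable_cong_sets[OF sets_eq_restrict_borel refl])

lemma measurable_measure_ball: "(\<lambda>x. measure M (ball x r \<inter> space M)) \<in> borel_measurable M"
proof -
  define Q where "Q = {p \<in> space (M \<Otimes>\<^sub>M M). dist (fst p) (snd p) < r}"
  have "Q \<in> sets (M \<Otimes>\<^sub>M M)" unfolding Q_def by measurable
  then have "(\<lambda>x. enn2real (emeasure M (Pair x -` Q))) \<in> borel_measurable M"
    by (intro borel_measurable_enn2real measurable_emeasure_Pair)
  moreover have "Pair x -` Q = ball x r \<inter> space M" if "x \<in> space M" for x
    using that by (auto simp: Q_def space_pair_measure dist_commute)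
  ultimately show ?thesis
    by (subst measurable_cong[where g = "\<lambda>x. enn2real (emeasure M (Pair x -` Q))"])
       (auto simp: measure_def)
qed

lemma sets_ball_Int_space[measurable]: "ball x r \<inter> space M \<in> sets M"
  using measurable_sets[OF measurable_real_ident, of "ball x r"] by simp

lemma integrable_measure_ball: "integrable M (\<lambda>x. measure M (ball x r \<inter> space M))"
  by (rule integrable_const_bound[where B=1]) (auto simp: measurable_measure_ball)

definition correlation_integral :: "real \<Rightarrow> real" where
  "correlation_integral r = (\<integral>x. measure M (ball x r \<inter> space M) \<partial>M)"

definition cell :: "real \<Rightarrow> int \<Rightarrow> real set" where
  "cell r j = {x \<in> space M. \<lfloor>x / r\<rfloor> = j}"

lemma sets_cell[measurable]: "cell r j \<in> sets M"
  unfolding cell_def by measurable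

lemma cell_eq_Ico: "r > 0 \<Longrightarrow> cell r j = {x \<in> space M. of_int j * r \<le> x \<and> x < (of_int j + 1) * r}"
  by (auto simp: cell_def floor_eq_iff field_simps)

lemma sum_measure_cell_shift_le_1:
  assumes "finite S"
  shows "(\<Sum>j\<in>S. measure M (cell r (j + l))) \<le> 1"
proof -
  have "(\<Sum>j\<in>S. measure M (cell r (j + l))) = measure M (\<Union>j\<in>S. cell r (j + l))"
    using assms
    by (intro finite_measure_finite_Union[symmetric]) (auto simp: disjoint_family_on_def cell_def)
  then show ?thesis using prob_le_1 by simp
qed

text \<open>The step function equal to \<open>\<mu>(cell)\<close> on each cell lies below \<open>x \<mapsto> \<mu>(B(x,r))\<close>.\<close>
lemma sum_measure_cell_sq_le:
  assumes "finite S" and "r > 0"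
  shows "(\<Sum>j\<in>S. (measure M (cell r j))\<^sup>2) \<le> correlation_integral r"
proof -
  define g where "g x = (\<Sum>j\<in>S. measure M (cell r j) * indicator (cell r j) x)" for x
  have "(\<Sum>j\<in>S. (measure M (cell r j))\<^sup>2) = (\<integral>x. g x \<partial>M)"
    unfolding g_def
    by (subst Bochner_Integration.integral_sum)
       (auto simp: power2_eq_square Int_absorb2 cell_def less_top[symmetric] intro!: integrable_real_indicator)
  also have "\<dots> \<le> correlation_integral r"
    unfolding correlation_integral_def
  proof (rule integral_mono)
    show "integrable M g"
      unfolding g_def by (auto simp: less_top[symmetric] intro!: integrable_real_indicator)
    show "integrable M (\<lambda>x. measure M (ball x r \<inter> space M))" by (rule integrable_measure_ball)
    fix x assume x: "x \<in> space M"
    have "g x = (if \<lfloor>x / r\<rfloor> \<in> S then measure M (cell r \<lfloor>x / r\<rfloor>) else 0)"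
      unfolding g_def using x assms(1)
      by (auto simp: cell_def indicator_def if_distrib[of "\<lambda>c. _ * c"] sum.delta' cong: if_cong)
    moreover have "cell r \<lfloor>x / r\<rfloor> \<subseteq> ball x r \<inter> space M"
      using abs_diff_less_if_floor_divide_eq[OF assms(2)] by (auto simp: cell_def dist_real_def)
    ultimately show "g x \<le> measure M (ball x r \<inter> space M)"
      by (auto intro!: finite_measure_mono)
  qed
  finally show ?thesis .
qed

lemma sum_measure_cell_products_le:
  assumes "finite S" and "r > 0"
  shows "(\<Sum>j\<in>S. measure M (cell r j) * measure M (cell r (j + l))) \<le> correlation_integral r"
proof -
  have amgm: "a * b \<le> (a\<^sup>2 + b\<^sup>2) / 2" for a b :: real
    using sum_squares_bound[of a b] by simp
  have "(\<Sum>j\<in>S. measure M (cell r j) * measure M (cell r (j + l)))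
      \<le> (\<Sum>j\<in>S. ((measure M (cell r j))\<^sup>2 + (measure M (cell r (j + l)))\<^sup>2) / 2)"
    by (intro sum_mono amgm)
  also have "\<dots> = ((\<Sum>j\<in>S. (measure M (cell r j))\<^sup>2) + (\<Sum>j\<in>(\<lambda>j. j + l) ` S. (measure M (cell r j))\<^sup>2)) / 2"
    by (simp add: sum_divide_distrib[symmetric] sum.distrib sum.reindex)
  also have "\<dots> \<le> correlation_integral r"
    using sum_measure_cell_sq_le[OF assms] sum_measure_cell_sq_le[of "(\<lambda>j. j + l) ` S" r] assms
    by simp
  finally show ?thesis .
qed

end

locale real_mpt = real_prob_space +
  fixes T :: "real \<Rightarrow> real"
  assumes measurable_T[measurable]: "T \<in> measurable M M"
    and distr_T: "distr M M T = M"
begin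

lemma measurable_funpow[measurable]: "(T ^^ n) \<in> measurable M M"
  by (rule measurable_compose_n[OF measurable_T])

lemma distr_funpow: "distr M M (T ^^ n) = M"
proof (induction n)
  case (Suc n)
  have "distr M M (T ^^ Suc n) = distr (distr M M T) M (T ^^ n)"
    by (simp only: funpow_Suc_right distr_distr[OF measurable_funpow measurable_T])
  then show ?case by (simp only: distr_T Suc.IH)
qed (simp add: distr_id2 sets_eq_imp_space_eq)

lemma measure_funpow_vimage: "A \<in> sets M \<Longrightarrow> measure M ((T ^^ n) -` A \<inter> space M) = measure M A"
  using measure_distr[OF measurable_funpow, of A n] by (simp only: distr_funpow)

lemma sets_A_set[measurable]: "A_set M T r k \<in> sets M"
  unfolding A_set_def by measurable

lemma sets_F_set[measurable]: "F_set M T n r \<in> sets M"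
  unfolding F_set_def by measurable

lemma measure_F_set_le:
  "measure M (F_set M T n r) \<le> real n * (\<Sum>k\<in>{1..<n}. measure M (A_set M T r k))"
proof -
  let ?U = "\<lambda>i. \<Union>k\<in>{1..<n}. (T ^^ i) -` A_set M T r k \<inter> space M"
  have "F_set M T n r \<subseteq> (\<Union>i<n. ?U i)"
  proof
    fix x assume "x \<in> F_set M T n r"
    then obtain i j where x: "x \<in> space M" and ij: "i < j" "j < n"
      and close: "\<bar>(T ^^ i) x - (T ^^ j) x\<bar> < r" by (auto simp: F_set_def)
    have "(T ^^ j) x = (T ^^ (j - i)) ((T ^^ i) x)"
      using ij by (metis funpow_add comp_apply le_add_diff_inverse2 less_imp_le)
    then have "(T ^^ i) x \<in> A_set M T r (j - i)"
      using close x measurable_space[OF measurable_funpow] by (auto simp: A_set_def)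
    moreover have "i \<in> {..<n}" "j - i \<in> {1..<n}" using ij by auto
    ultimately show "x \<in> (\<Union>i<n. ?U i)" using x by blast
  qed
  then have "measure M (F_set M T n r) \<le> (\<Sum>i<n. measure M (?U i))"
    by (intro order.trans[OF finite_measure_mono finite_measure_subadditive_finite]) auto
  also have "\<dots> \<le> (\<Sum>i<n. \<Sum>k\<in>{1..<n}. measure M ((T ^^ i) -` A_set M T r k \<inter> space M))"
    by (intro sum_mono finite_measure_subadditive_finite) auto
  also have "\<dots> = real n * (\<Sum>k\<in>{1..<n}. measure M (A_set M T r k))"
    by (simp add: measure_funpow_vimage)
  finally show ?thesis .
qed

end

locale bv_mixing_real_mpt = real_mpt +
  fixes Cmix \<theta> :: real
  assumes Cmix_pos: "Cmix > 0" and \<theta>_pos: "\<theta> > 0"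
    and mixing: "\<And>\<psi> \<phi> (n::nat). bounded_variation (space M) \<psi> \<Longrightarrow> integrable M \<phi> \<Longrightarrow>
        \<bar>(\<integral>x. \<psi> x * \<phi> ((T ^^ n) x) \<partial>M) - (\<integral>x. \<psi> x \<partial>M) * (\<integral>x. \<phi> x \<partial>M)\<bar>
          \<le> Cmix * bv_norm (space M) \<psi> * (\<integral>x. \<bar>\<phi> x\<bar> \<partial>M) * exp (- \<theta> * real n)"
begin

lemma measure_cell_Int_vimage_le:
  assumes "r > 0"
  shows "measure M (cell r j \<inter> (T ^^ k) -` cell r j')
     \<le> measure M (cell r j) * measure M (cell r j') + 3 * Cmix * exp (- \<theta> * real k) * measure M (cell r j')"
proof -
  define \<psi> where "\<psi> = (indicator (cell r j) :: real \<Rightarrow> real)"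
  define \<phi> where "\<phi> = (indicator (cell r j') :: real \<Rightarrow> real)"
  have "of_int j * r \<le> (of_int j + 1) * r" using assms by simp
  then have bv: "bounded_variation (space M) \<psi>" "bv_norm (space M) \<psi> \<le> 3"
    unfolding \<psi>_def cell_eq_Ico[OF assms]
    using not_empty by (auto intro!: bounded_variation_indicator_Ico bv_norm_indicator_Ico_le)
  have \<phi>_int: "integrable M \<phi>"
    unfolding \<phi>_def by (auto simp: less_top[symmetric] intro!: integrable_real_indicator)
  have "cell r i \<inter> space M = cell r i" for i by (auto simp: cell_def)
  moreover have "cell r j \<inter> (T ^^ k) -` cell r j' \<inter> space M = cell r j \<inter> (T ^^ k) -` cell r j'"
    by (auto simp: cell_def)
  moreover note mixing[OF bv(1) \<phi>_int, of k]
  ultimately have "\<bar>measure M (cell r j \<inter> (T ^^ k) -` cell r j') - measure M (cell r j) * measure M (cell r j')\<bar>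
     \<le> Cmix * bv_norm (space M) \<psi> * measure M (cell r j') * exp (- \<theta> * real k)"
    unfolding \<psi>_def \<phi>_def
    by (simp add: indicator_inter_arith[symmetric] indicator_vimage[symmetric])
  also have "\<dots> \<le> Cmix * 3 * measure M (cell r j') * exp (- \<theta> * real k)"
    using bv(2) Cmix_pos by (intro mult_right_mono mult_left_mono) auto
  finally show ?thesis by (simp add: ac_simps)
qed

lemma sets_cell_Int_vimage[measurable]: "cell r j \<inter> (T ^^ k) -` cell r j' \<in> sets M"
proof -
  have "cell r j \<inter> (T ^^ k) -` cell r j' = cell r j \<inter> ((T ^^ k) -` cell r j' \<inter> space M)"
    by (auto simp: cell_def)
  then show ?thesis by simp
qed

lemma measure_UN_cell_Int_vimage_shift_le:
  assumes "finite S" and "r > 0"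
  shows "measure M (\<Union>j\<in>S. cell r j \<inter> (T ^^ k) -` cell r (j + l))
     \<le> correlation_integral r + 3 * Cmix * exp (- \<theta> * real k)"
proof -
  let ?E = "exp (- \<theta> * real k)"
  have "measure M (\<Union>j\<in>S. cell r j \<inter> (T ^^ k) -` cell r (j + l))
      \<le> (\<Sum>j\<in>S. measure M (cell r j \<inter> (T ^^ k) -` cell r (j + l)))"
    using assms(1) by (intro finite_measure_subadditive_finite) auto
  also have "\<dots> \<le> (\<Sum>j\<in>S. measure M (cell r j) * measure M (cell r (j + l))
       + 3 * Cmix * ?E * measure M (cell r (j + l)))"
    by (intro sum_mono measure_cell_Int_vimage_le[OF assms(2)])
  also have "\<dots> = (\<Sum>j\<in>S. measure M (cell r j) * measure M (cell r (j + l)))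
       + 3 * Cmix * ?E * (\<Sum>j\<in>S. measure M (cell r (j + l)))"
    by (simp add: sum.distrib sum_distrib_left)
  also have "\<dots> \<le> correlation_integral r + 3 * Cmix * ?E * 1"
    using sum_measure_cell_products_le[OF assms] sum_measure_cell_shift_le_1[OF assms(1)] Cmix_pos
    by (intro add_mono mult_left_mono) auto
  finally show ?thesis by simp
qed

lemma measure_A_set_le:
  assumes "r > 0"
  shows "measure M (A_set M T r k) \<le> 3 * correlation_integral r + 9 * Cmix * exp (- \<theta> * real k)"
proof (rule measure_le_if_truncations_le[OF sets_A_set measurable_real_ident])
  fix N :: nat
  define S where "S = {\<lfloor>- real N / r\<rfloor> .. \<lfloor>real N / r\<rfloor>}"
  let ?U = "\<lambda>l. \<Union>j\<in>S. cell r j \<inter> (T ^^ k) -` cell r (j + l)"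
  have "{x \<in> A_set M T r k. \<bar>x\<bar> \<le> N} \<subseteq> (\<Union>l\<in>{-1, 0, 1}. ?U l)"
  proof
    fix x assume x: "x \<in> {x \<in> A_set M T r k. \<bar>x\<bar> \<le> N}"
    then have "x \<in> space M" "\<bar>x - (T ^^ k) x\<bar> < r" by (auto simp: A_set_def)
    moreover have "- real N / r \<le> x / r" "x / r \<le> real N / r"
      using x assms by (auto simp: field_simps)
    then have "\<lfloor>x / r\<rfloor> \<in> S" by (auto simp: S_def intro!: floor_mono)
    ultimately show "x \<in> (\<Union>l\<in>{-1, 0, 1}. ?U l)"
      using floor_divide_adjacent_if_abs_diff_less[OF assms] measurable_space[OF measurable_funpow]
      by (auto simp: cell_def)
  qed
  moreover have "?U l \<in> sets M" for l
    by (auto simp: S_def)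
  ultimately have "measure M {x \<in> A_set M T r k. \<bar>x\<bar> \<le> N} \<le> (\<Sum>l\<in>{-1, 0, 1}. measure M (?U l))"
    by (intro order.trans[OF finite_measure_mono finite_measure_subadditive_finite]) auto
  also have "\<dots> \<le> (\<Sum>l\<in>{-1, 0, 1::int}. correlation_integral r + 3 * Cmix * exp (- \<theta> * real k))"
    using measure_UN_cell_Int_vimage_shift_le[OF _ assms] by (intro sum_mono) (simp add: S_def)
  finally show "measure M {x \<in> A_set M T r k. \<bar>x\<bar> \<le> N}
      \<le> 3 * correlation_integral r + 9 * Cmix * exp (- \<theta> * real k)"
    by simp
qed

lemma correlation_integral_nonneg: "correlation_integral r \<ge> 0"
  unfolding correlation_integral_def by simp

lemma sum_measure_A_set_le:
  assumes "r > 0" and short: "\<And>k. k \<ge> 1 \<Longrightarrow> measure M (A_set M T r k) \<le> a"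
  shows "(\<Sum>k\<in>{1..<n}. measure M (A_set M T r k))
    \<le> real K * a + real n * (3 * correlation_integral r + 9 * Cmix * exp (- \<theta> * real K))"
proof -
  define c where "c = 3 * correlation_integral r + 9 * Cmix * exp (- \<theta> * real K)"
  have "a \<ge> 0" using short[of 1] measure_nonneg[of M] by (meson le_refl order.trans)
  have "c \<ge> 0" using Cmix_pos correlation_integral_nonneg by (simp add: c_def)
  have "measure M (A_set M T r k) \<le> of_bool (k < K) * a + c" if "k \<ge> 1" for k
  proof (cases "k < K")
    case True
    then show ?thesis using short[OF that] \<open>c \<ge> 0\<close> by simp
  next
    case False
    then have "exp (- \<theta> * real k) \<le> exp (- \<theta> * real K)" using \<theta>_pos by simp
    from mult_left_mono[OF this, of "9 * Cmix"]
    have "measure M (A_set M T r k) \<le> c"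
      using measure_A_set_le[OF assms(1), of k] Cmix_pos
      unfolding c_def by linarith
    then show ?thesis using False by simp
  qed
  then have "(\<Sum>k\<in>{1..<n}. measure M (A_set M T r k)) \<le> (\<Sum>k\<in>{1..<n}. of_bool (k < K) * a + c)"
    by (intro sum_mono) auto
  also have "\<dots> = real (card ({1..<n} \<inter> {k. k < K})) * a + real (n - 1) * c"
    by (simp add: sum.distrib sum_distrib_right[symmetric])
  also have "\<dots> \<le> real K * a + real n * c"
    using \<open>a \<ge> 0\<close> \<open>c \<ge> 0\<close>
    by (intro add_mono mult_right_mono) (auto intro: order.trans[OF card_mono[of "{..<K}"]])
  finally show ?thesis unfolding c_def .
qed

lemma measure_F_set_le_rate:
  fixes C s r h :: real
  assumes short: "\<And>\<rho> k. \<rho> > 0 \<Longrightarrow> k \<ge> 1 \<Longrightarrow> measure M (A_set M T \<rho> k) \<le> C * \<rho> powr s"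
    and "C > 0" "s > 0" "r > 0" "h > 0" "n \<ge> 3"
    and radius: "r \<le> 1 / ((real n * ln (real n)) powr (1 / s) * h)"
    and corr: "correlation_integral r \<le> 1 / ((real n)\<^sup>2 * h)"
  shows "measure M (F_set M T n r) \<le> C * (3 / \<theta> + 1) * h powr (- s) + 3 / h + 9 * Cmix / real n"
proof -
  let ?x = "real n"
  define K where "K = nat \<lceil>3 * ln ?x / \<theta>\<rceil>"
  have "?x \<ge> 3" using \<open>n \<ge> 3\<close> by simp
  note K_le = log_cutoff_le[OF this \<theta>_pos, folded K_def]
    and exp_K = exp_log_cutoff_le[OF this \<theta>_pos, folded K_def]
  have "ln ?x \<ge> 1" using ln_ge_1_if_ge_3[OF \<open>?x \<ge> 3\<close>] .
  have r_s: "r powr s \<le> 1 / (?x * ln ?x * h powr s)"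
    using powr_le_if_le_inverse_root[OF \<open>r > 0\<close> \<open>s > 0\<close> _ \<open>h > 0\<close> radius] \<open>ln ?x \<ge> 1\<close> \<open>?x \<ge> 3\<close> by simp
  have "measure M (F_set M T n r)
      \<le> ?x * (real K * (C * r powr s) + ?x * (3 * correlation_integral r + 9 * Cmix * exp (- \<theta> * real K)))"
    using measure_F_set_le sum_measure_A_set_le[OF \<open>r > 0\<close> short[OF \<open>r > 0\<close>]]
    by (meson mult_left_mono of_nat_0_le_iff order.trans)
  also have "\<dots> \<le> ?x * ((3 / \<theta> + 1) * ln ?x * (C / (?x * ln ?x * h powr s))
      + ?x * (3 / (?x\<^sup>2 * h) + 9 * Cmix / ?x ^ 3))"
  proof -
    have "C * r powr s \<le> C / (?x * ln ?x * h powr s)"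
      using mult_left_mono[OF r_s, of C] \<open>C > 0\<close> by simp
    then have "real K * (C * r powr s) \<le> (3 / \<theta> + 1) * ln ?x * (C / (?x * ln ?x * h powr s))"
      using K_le \<open>C > 0\<close> by (intro mult_mono) auto
    moreover have "9 * Cmix * exp (- \<theta> * real K) \<le> 9 * Cmix / ?x ^ 3"
      using mult_left_mono[OF exp_K, of "9 * Cmix"] Cmix_pos by simp
    ultimately show ?thesis
      using corr by (intro mult_left_mono add_mono) auto
  qed
  also have "\<dots> = C * (3 / \<theta> + 1) * h powr (- s) + 3 / h + 9 * Cmix / ?x"
    using \<open>ln ?x \<ge> 1\<close> \<open>n \<ge> 3\<close> \<open>h > 0\<close>
    by (simp add: field_simps power2_eq_square power3_eq_cube powr_minus)
  finally show ?thesis .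
qed

end

lemma exp_mixing_BV_L1_imp_bv_mixing_real_mpt:
  assumes "real_mpt M T" and "exp_mixing_BV_L1 M T"
  shows "\<exists>Cmix \<theta>. bv_mixing_real_mpt M T Cmix \<theta>"
  using assms unfolding exp_mixing_BV_L1_def bv_mixing_real_mpt_def bv_mixing_real_mpt_axioms_def
  by blast

theorem mainTheorem12:
  fixes M :: "real measure" and T :: "real \<Rightarrow> real" and X :: "real set"
    and C s :: real and r h :: "nat \<Rightarrow> real"
  assumes "is_interval X"
    and "prob_space M"
    and "space M = X" and "sets M = sets (restrict_space borel X)"
    and "T \<in> measurable M M" and "distr M M T = M"
    and "exp_mixing_BV_L1 M T"
    and "C > 0" and "s > 0"
    and "\<And>\<rho> n. \<rho> > 0 \<Longrightarrow> n \<ge> 1 \<Longrightarrow> measure M (A_set M T \<rho> n) \<le> C * \<rho> powr s"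
    and "\<And>n. r n > 0" and "\<And>n. h n > 0"
    and "filterlim h at_top sequentially"
    and "eventually (\<lambda>n. r n \<le> 1 / ((real n * ln (real n)) powr (1 / s) * h n)
           \<and> (\<integral>x. measure M (ball x (r n) \<inter> space M) \<partial>M) \<le> 1 / ((real n)\<^sup>2 * h n))
         sequentially"
  shows "measure M (\<Union>N. \<Inter>n\<in>{N..}. F_set M T n (r n)) = 0"
proof -
  have "real_mpt M T"
    using assms(2-6) by (simp add: real_mpt_def real_mpt_axioms_def real_prob_space_def
        real_prob_space_axioms_def)
  then obtain Cmix \<theta> where "bv_mixing_real_mpt M T Cmix \<theta>"
    using exp_mixing_BV_L1_imp_bv_mixing_real_mpt assms(7) by blast
  then interpret bv_mixing_real_mpt M T Cmix \<theta> .
  define b where "b = (\<lambda>n. C * (3 / \<theta> + 1) * h n powr (- s) + 3 / h n + 9 * Cmix / real n)"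
  have bound: "eventually (\<lambda>n. measure M (F_set M T n (r n)) \<le> b n) sequentially"
    using assms(14) eventually_ge_at_top[of 3]
  proof eventually_elim
    case (elim n)
    then show ?case
      unfolding b_def correlation_integral_def[symmetric]
      by (intro measure_F_set_le_rate[OF assms(10,8,9,11,12)]) auto
  qed
  have "(\<lambda>n. h n powr (- s)) \<longlonglongrightarrow> 0"
    using assms(9,13) by (intro tendsto_neg_powr) auto
  moreover have "(\<lambda>n. inverse (h n)) \<longlonglongrightarrow> 0"
    using assms(13) by (rule tendsto_inverse_0_at_top)
  ultimately have "b \<longlonglongrightarrow> C * (3 * inverse \<theta> + 1) * 0 + 3 * 0 + 9 * Cmix * 0"
    unfolding b_def divide_inverse by (intro tendsto_intros lim_inverse_n)
  then have b0: "b \<longlonglongrightarrow> 0" by simp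
  have "\<forall>n. 0 \<le> measure M (F_set M T n (r n))" by simp
  from tendsto_sandwich[OF always_eventually[OF this] bound tendsto_const b0]
  have "(\<lambda>n. measure M (F_set M T n (r n))) \<longlonglongrightarrow> 0" .
  then show ?thesis by (rule measure_liminf_eq_0[OF sets_F_set])
qed

end
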